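(* Let $(X,d)$ be a metric space and $\pi:X\to X_0$ a fibration. For $x\in X_0$ let $d_x$ be the restriction of $d$ to the fiber $\pi^{-1}\{x\}$. Let $\mu,\nu$ be measures on $X$ with $\pi_*\mu=\pi_*\nu=\lambda$, and for $x\in X_0$ let $\mu_x,\nu_x$ be the disintegrated measures on $\pi^{-1}(x)$ (so that $\mu=\int\mu_x\,d\lambda(x)$, $\nu=\int\nu_x\,d\lambda(x)$). Then $$d_L(\mu,\nu)\le\sup_{x\in X_0} d_{L,x}(\mu_x,\nu_x),$$ where $d_{L,x}$ denotes the Lévy–Prokhorov distance on $\pi^{-1}(x)$ with respect to $d_x$.
   Context: For measures $\mu,\nu$ on a metric space $(Y,\delta)$, the Lévy–Prokhorov distance is $d_L(\mu,\nu)=\inf\{\varepsilon>0:\ \nu(A_\varepsilon)\ge\mu(A)\ \text{for all } A\subset Y\}$, with $A_\varepsilon$ the $\varepsilon$-neighborhood of $A$ for $\delta$. *)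

theory Defs
  imports "HOL-Analysis.Analysis"
begin

definition nbhd_in :: "'a::metric_space set \<Rightarrow> real \<Rightarrow> 'a set \<Rightarrow> 'a set" where
  "nbhd_in S \<epsilon> A = {y \<in> S. \<exists>x\<in>A. dist x y < \<epsilon>}"

text \<open>Levy--Prokhorov distance of two Borel measures considered on the subspace S
  (metric = restriction of dist to S); test sets are the Borel sets contained in S.
  Value in ennreal, the infimum of the empty set being \<infinity>.\<close>
definition levy_prokhorov_on :: "'a::metric_space set \<Rightarrow> 'a measure \<Rightarrow> 'a measure \<Rightarrow> ennreal" where
  "levy_prokhorov_on S \<mu> \<nu> = Inf {ennreal \<epsilon> | \<epsilon>. \<epsilon> > 0 \<and>
      (\<forall>A. A \<in> sets borel \<longrightarrow> A \<subseteq> S \<longrightarrow> emeasure \<mu> A \<le> emeasure \<nu> (nbhd_in S \<epsilon> A))}"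

abbreviation levy_prokhorov :: "'a::metric_space measure \<Rightarrow> 'a measure \<Rightarrow> ennreal" where
  "levy_prokhorov \<mu> \<nu> \<equiv> levy_prokhorov_on UNIV \<mu> \<nu>"

definition disintegration ::
  "'a::metric_space measure \<Rightarrow> ('a \<Rightarrow> 'b) \<Rightarrow> 'b measure \<Rightarrow> ('b \<Rightarrow> 'a measure) \<Rightarrow> bool" where
  "disintegration \<mu> \<pi> L \<mu>x \<longleftrightarrow>
     (\<forall>x\<in>space L. sets (\<mu>x x) = sets borel \<and> emeasure (\<mu>x x) {y. \<pi> y \<noteq> x} = 0) \<and>
     (\<forall>A\<in>sets borel. (\<lambda>x. emeasure (\<mu>x x) A) \<in> borel_measurable L \<and>
        emeasure \<mu> A = (\<integral>\<^sup>+ x. emeasure (\<mu>x x) A \<partial>L))"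

end

theory Submission
  imports Defs
begin

text \<open>Fix \<open>\<epsilon>\<close> strictly above the supremum of the fiberwise distances and a Borel set \<open>A\<close>.
  On each fiber \<open>\<mu>\<^sub>x A = \<mu>\<^sub>x (A \<inter> \<pi>\<^sup>-\<^sup>1{x}) \<le> \<nu>\<^sub>x (A\<^sub>\<epsilon>)\<close>, since the fiber neighbourhood of
  \<open>A \<inter> \<pi>\<^sup>-\<^sup>1{x}\<close> lies inside the ambient neighbourhood \<open>A\<^sub>\<epsilon>\<close>. Integrating over the base
  gives \<open>\<mu> A \<le> \<nu> A\<^sub>\<epsilon>\<close>, so \<open>\<epsilon>\<close> is admissible for \<open>d\<^sub>L(\<mu>,\<nu>)\<close>.\<close>

lemma nbhd_in_eq: "nbhd_in S e A = S \<inter> (\<Union>a\<in>A. ball a e)"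
  unfolding nbhd_in_def by auto

lemma nbhd_in_borel: "S \<in> sets borel \<Longrightarrow> nbhd_in S e A \<in> sets borel"
  unfolding nbhd_in_eq by (rule sets.Int) (auto intro!: borel_open open_UN)

lemma nbhd_in_mono: "e' \<le> e \<Longrightarrow> S \<subseteq> T \<Longrightarrow> A' \<subseteq> A \<Longrightarrow> nbhd_in S e' A' \<subseteq> nbhd_in T e A"
  unfolding nbhd_in_def by (auto intro: less_le_trans)

lemma levy_prokhorov_on_le:
  assumes "\<And>e A. e > 0 \<Longrightarrow> s < ennreal e \<Longrightarrow> A \<in> sets borel \<Longrightarrow> A \<subseteq> S \<Longrightarrow>
             emeasure \<mu> A \<le> emeasure \<nu> (nbhd_in S e A)"
  shows "levy_prokhorov_on S \<mu> \<nu> \<le> s"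
proof (rule ennreal_le_epsilon)
  fix d :: real assume d: "s < top" "0 < d"
  then obtain r where r: "s = ennreal r" "r \<ge> 0"
    by (cases s rule: ennreal_cases) auto
  have "r + d > 0" "s < ennreal (r + d)"
    using r d by (auto simp: ennreal_less_iff)
  then have "\<forall>A. A \<in> sets borel \<longrightarrow> A \<subseteq> S \<longrightarrow> emeasure \<mu> A \<le> emeasure \<nu> (nbhd_in S (r + d) A)"
    using assms by blast
  with \<open>r + d > 0\<close> have "levy_prokhorov_on S \<mu> \<nu> \<le> ennreal (r + d)"
    unfolding levy_prokhorov_on_def by (intro Inf_lower) blast
  then show "levy_prokhorov_on S \<mu> \<nu> \<le> s + ennreal d"
    using r d by (simp add: ennreal_plus)
qed

lemma levy_prokhorov_on_less_imp_le_nbhd: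
  assumes lp: "levy_prokhorov_on S \<mu> \<nu> < ennreal e"
    and S: "S \<in> sets borel" and sets_\<nu>: "sets \<nu> = sets borel"
    and A: "A \<in> sets borel" "A \<subseteq> S"
  shows "emeasure \<mu> A \<le> emeasure \<nu> (nbhd_in S e A)"
proof -
  obtain e' where "e' > 0" "ennreal e' < ennreal e"
    and adm: "\<forall>B. B \<in> sets borel \<longrightarrow> B \<subseteq> S \<longrightarrow> emeasure \<mu> B \<le> emeasure \<nu> (nbhd_in S e' B)"
    using lp unfolding levy_prokhorov_on_def Inf_less_iff by auto
  then have "e' \<le> e" by (simp add: ennreal_less_iff)
  have "emeasure \<mu> A \<le> emeasure \<nu> (nbhd_in S e' A)"
    using adm A by blast
  also have "\<dots> \<le> emeasure \<nu> (nbhd_in S e A)"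
  proof (rule emeasure_mono)
    show "nbhd_in S e' A \<subseteq> nbhd_in S e A"
      using \<open>e' \<le> e\<close> by (rule nbhd_in_mono) auto
    show "nbhd_in S e A \<in> sets \<nu>"
      unfolding sets_\<nu> using S by (rule nbhd_in_borel)
  qed
  finally show ?thesis .
qed

lemma emeasure_Int_carrier:
  assumes "A \<in> sets M" "S \<in> sets M" "emeasure M (space M - S) = 0"
  shows "emeasure M A = emeasure M (A \<inter> S)"
proof -
  have "A - S \<in> null_sets M"
    using assms emeasure_mono[of "A - S" "space M - S" M] sets.sets_into_space[of A M]
    by (auto simp: null_sets_def)
  then have "emeasure M ((A \<inter> S) \<union> (A - S)) = emeasure M (A \<inter> S)"
    using assms by (intro emeasure_Un_null_set) auto
  then show ?thesis by (metis Int_Diff_Un)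
qed

lemma disintegration_fiber_le_nbhd:
  fixes \<pi> :: "'a::metric_space \<Rightarrow> 'b::metric_space"
  assumes \<pi>_meas: "\<pi> \<in> borel_measurable borel" and x: "x \<in> space L"
    and dis_\<mu>: "disintegration \<mu> \<pi> L \<mu>x" and dis_\<nu>: "disintegration \<nu> \<pi> L \<nu>x"
    and lp: "levy_prokhorov_on (\<pi> -` {x}) (\<mu>x x) (\<nu>x x) < ennreal e"
    and A: "A \<in> sets borel"
  shows "emeasure (\<mu>x x) A \<le> emeasure (\<nu>x x) (nbhd_in UNIV e A)"
proof -
  let ?F = "\<pi> -` {x}"
  have sets_\<mu>x: "sets (\<mu>x x) = sets borel" and carried: "emeasure (\<mu>x x) {y. \<pi> y \<noteq> x} = 0"
    and sets_\<nu>x: "sets (\<nu>x x) = sets borel"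
    using dis_\<mu> dis_\<nu> x unfolding disintegration_def by auto
  have F: "?F \<in> sets borel"
    using \<pi>_meas by (simp add: measurable_sets_borel)
  have "space (\<mu>x x) - ?F = {y. \<pi> y \<noteq> x}"
    using sets_eq_imp_space_eq[OF sets_\<mu>x] by auto
  then have "emeasure (\<mu>x x) A = emeasure (\<mu>x x) (A \<inter> ?F)"
    using A F carried unfolding sets_\<mu>x[symmetric] by (intro emeasure_Int_carrier) simp_all
  also have "\<dots> \<le> emeasure (\<nu>x x) (nbhd_in ?F e (A \<inter> ?F))"
    using A F sets_\<nu>x by (intro levy_prokhorov_on_less_imp_le_nbhd[OF lp]) auto
  also have "\<dots> \<le> emeasure (\<nu>x x) (nbhd_in UNIV e A)"
  proof (rule emeasure_mono)
    show "nbhd_in ?F e (A \<inter> ?F) \<subseteq> nbhd_in UNIV e A"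
      by (rule nbhd_in_mono) auto
    show "nbhd_in UNIV e A \<in> sets (\<nu>x x)"
      unfolding sets_\<nu>x by (rule nbhd_in_borel) simp
  qed
  finally show ?thesis .
qed

theorem lemma18p0p6:
  fixes \<pi> :: "'a::metric_space \<Rightarrow> 'b::metric_space"
    and \<mu> \<nu> :: "'a measure" and L :: "'b measure"
    and \<mu>x \<nu>x :: "'b \<Rightarrow> 'a measure"
  assumes sets_\<mu>: "sets \<mu> = sets borel" and sets_\<nu>: "sets \<nu> = sets borel"
    and sets_L: "sets L = sets borel"
    and \<pi>_meas: "\<pi> \<in> borel_measurable borel"
    and push_\<mu>: "distr \<mu> L \<pi> = L" and push_\<nu>: "distr \<nu> L \<pi> = L"
    and dis_\<mu>: "disintegration \<mu> \<pi> L \<mu>x"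
    and dis_\<nu>: "disintegration \<nu> \<pi> L \<nu>x"
  shows "levy_prokhorov \<mu> \<nu>
           \<le> (SUP x\<in>space L. levy_prokhorov_on (\<pi> -` {x}) (\<mu>x x) (\<nu>x x))"
proof (rule levy_prokhorov_on_le)
  fix e and A :: "'a set"
  assume e: "(SUP x\<in>space L. levy_prokhorov_on (\<pi> -` {x}) (\<mu>x x) (\<nu>x x)) < ennreal e"
    and A: "A \<in> sets borel"
  have "emeasure \<mu> A = (\<integral>\<^sup>+ x. emeasure (\<mu>x x) A \<partial>L)"
    using dis_\<mu> A unfolding disintegration_def by auto
  also have "\<dots> \<le> (\<integral>\<^sup>+ x. emeasure (\<nu>x x) (nbhd_in UNIV e A) \<partial>L)"
  proof (rule nn_integral_mono)
    fix x assume x: "x \<in> space L"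
    then have "levy_prokhorov_on (\<pi> -` {x}) (\<mu>x x) (\<nu>x x) < ennreal e"
      by (rule le_less_trans[OF SUP_upper e])
    then show "emeasure (\<mu>x x) A \<le> emeasure (\<nu>x x) (nbhd_in UNIV e A)"
      using disintegration_fiber_le_nbhd[OF \<pi>_meas x dis_\<mu> dis_\<nu>] A by blast
  qed
  also have "\<dots> = emeasure \<nu> (nbhd_in UNIV e A)"
    using dis_\<nu> nbhd_in_borel[of UNIV e A] unfolding disintegration_def by auto
  finally show "emeasure \<mu> A \<le> emeasure \<nu> (nbhd_in UNIV e A)" .
qed

end
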